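(* In the setting below, if $\eta \geq \eta_0$ and an oscillation happens at iteration $t$, then $\hat{w}_{t+1} \geq (1+\gamma^2)\hat{w}_t$.
   Context: Dimension $d=2$. Data $x_1,\dots,x_n\in\mathbb{R}^2$ with $\|x_i\|\le 1$, linearly separable (some $w$ has $\langle w,x_i\rangle>0$ for all $i$). $F(w) = \frac{1}{n}\sum_{i=1}^n \log(1+\exp(-\langle w, x_i\rangle))$. Maximum margin $\gamma = \max_{\|w\|=1}\min_i \langle w, x_i\rangle$ with maximizer the unit vector $w_*$; $v_*$ is a fixed unit vector orthogonal to $w_*$. Gradient descent: $w_0=0$, $w_{t+1} = w_t - \eta\nabla F(w_t)$ with constant $\eta>0$. $\hat{w}_t = \langle w_t, w_*\rangle$, $\tilde{w}_t = \langle w_t, v_*\rangle$. $\eta_0 = \max(n, \frac{32}{\gamma^2}\log\frac{256}{\gamma^2})$. $\lambda = \frac{1}{\gamma}\log\frac{1}{\exp(1/(8\eta))-1}$. An oscillation happens at iteration $t\ge 0$ if all of: (1) $\hat{w}_t \geq \lambda$; (2) $F(w_t) > 1/(8\eta)$ and $F(w_{t+1}) > 1/(8\eta)$; (3) $\tilde{w}_{t+1}\tilde{w}_t < 0$. *)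

theory Defs
  imports "HOL-Analysis.Analysis"
begin

definition logloss :: "nat \<Rightarrow> (nat \<Rightarrow> real^2) \<Rightarrow> real^2 \<Rightarrow> real" where
  "logloss n x w = (1 / real n) * (\<Sum>i<n. ln (1 + exp (- (w \<bullet> x i))))"

definition logloss_grad :: "nat \<Rightarrow> (nat \<Rightarrow> real^2) \<Rightarrow> real^2 \<Rightarrow> real^2" where
  "logloss_grad n x w = (1 / real n) *\<^sub>R
     (\<Sum>i<n. (- 1 / (1 + exp (w \<bullet> x i))) *\<^sub>R x i)"

primrec gd :: "nat \<Rightarrow> (nat \<Rightarrow> real^2) \<Rightarrow> real \<Rightarrow> nat \<Rightarrow> real^2" where
  "gd n x \<eta> 0 = 0"
| "gd n x \<eta> (Suc t) = gd n x \<eta> t - \<eta> *\<^sub>R logloss_grad n x (gd n x \<eta> t)"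

definition separable :: "nat \<Rightarrow> (nat \<Rightarrow> real^2) \<Rightarrow> bool" where
  "separable n x \<longleftrightarrow> (\<exists>w. \<forall>i<n. w \<bullet> x i > 0)"

definition margin_of :: "nat \<Rightarrow> (nat \<Rightarrow> real^2) \<Rightarrow> real^2 \<Rightarrow> real" where
  "margin_of n x w = Min ((\<lambda>i. w \<bullet> x i) ` {..<n})"

definition max_margin :: "nat \<Rightarrow> (nat \<Rightarrow> real^2) \<Rightarrow> real" where
  "max_margin n x = (SUP w\<in>{w. norm w = 1}. margin_of n x w)"

definition eta0 :: "nat \<Rightarrow> real \<Rightarrow> real" where
  "eta0 n \<gamma> = max (real n) (32 / \<gamma>\<^sup>2 * ln (256 / \<gamma>\<^sup>2))"

definition lam :: "real \<Rightarrow> real \<Rightarrow> real" where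
  "lam \<gamma> \<eta> = (1 / \<gamma>) * ln (1 / (exp (1 / (8 * \<eta>)) - 1))"

definition oscillation ::
  "nat \<Rightarrow> (nat \<Rightarrow> real^2) \<Rightarrow> real \<Rightarrow> real^2 \<Rightarrow> real^2 \<Rightarrow> nat \<Rightarrow> bool" where
  "oscillation n x \<eta> wstar vstar t \<longleftrightarrow>
     gd n x \<eta> t \<bullet> wstar \<ge> lam (max_margin n x) \<eta>
   \<and> logloss n x (gd n x \<eta> t) > 1 / (8 * \<eta>)
   \<and> logloss n x (gd n x \<eta> (Suc t)) > 1 / (8 * \<eta>)
   \<and> (gd n x \<eta> (Suc t) \<bullet> vstar) * (gd n x \<eta> t \<bullet> vstar) < 0"

end

theory Submission
  imports Defs
begin

text \<open>Every gradient step adds to \<open>w\<close> a nonnegative combination of the data points. Each of them has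
  component at least \<open>\<gamma>\<close> along \<open>w\<^sub>*\<close> and at most \<open>1\<close> in absolute value along \<open>v\<^sub>*\<close>, so the
  step increases \<open>w_hat\<close> by at least \<open>\<gamma>\<close> times the change of \<open>w_tilde\<close>. A loss above \<open>1/(8\<eta>)\<close>
  forces some \<open>\<langle>w\<^sub>t, x\<^sub>i\<rangle> < \<gamma>\<lambda>\<close>, hence \<open>|w_tilde t| > \<gamma> (w_hat t - \<lambda>)\<close>; across a sign change
  of \<open>w_tilde\<close> its change is \<open>|w_tilde t| + |w_tilde (t+1)| > 2\<gamma> (w_hat t - \<lambda>)\<close>. Finally \<open>\<eta> \<ge> \<eta>\<^sub>0\<close>
  gives \<open>\<lambda> \<le> \<eta>\<gamma>/4\<close>, while already the first step makes \<open>w_hat \<ge> \<eta>\<gamma>/2\<close>; so \<open>2\<lambda> \<le> w_hat t\<close>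
  and \<open>w_hat\<close> increases by at least \<open>\<gamma>\<^sup>2 w_hat t\<close>.\<close>

lemma orthonormal_pair_expansion:
  fixes w v y :: "'a::euclidean_space"
  assumes "DIM('a) = 2" and "norm w = 1" and "norm v = 1" and "v \<bullet> w = 0"
  shows "y = (y \<bullet> w) *\<^sub>R w + (y \<bullet> v) *\<^sub>R v"
proof -
  have "w \<noteq> v" using assms(2,4) by (metis norm_eq_1 zero_neq_one)
  have orth: "pairwise orthogonal {w, v}"
    using assms(4) by (simp add: pairwise_insert orthogonal_def inner_commute)
  have "independent {w, v}"
    using assms(2,3) by (intro pairwise_orthogonal_independent[OF orth]) auto
  then have "UNIV \<subseteq> span {w, v}"
    using \<open>w \<noteq> v\<close> assms(1) by (intro card_ge_dim_independent) auto
  then have "(\<Sum>b\<in>{w, v}. (y \<bullet> b) *\<^sub>R b) = y"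
    using assms(2,3) by (intro orthonormal_basis_expand[OF orth]) auto
  then show ?thesis using \<open>w \<noteq> v\<close> by simp
qed

lemma mult_abs_weighted_sum_le_weighted_sum:
  fixes s a b :: "'i \<Rightarrow> real"
  assumes "0 \<le> c" and "\<And>k. k \<in> K \<Longrightarrow> 0 \<le> s k"
    and "\<And>k. k \<in> K \<Longrightarrow> c \<le> a k" and "\<And>k. k \<in> K \<Longrightarrow> \<bar>b k\<bar> \<le> 1"
  shows "c * \<bar>\<Sum>k\<in>K. s k * b k\<bar> \<le> (\<Sum>k\<in>K. s k * a k)"
proof -
  have "\<bar>\<Sum>k\<in>K. s k * b k\<bar> \<le> (\<Sum>k\<in>K. s k * \<bar>b k\<bar>)"
    using sum_abs[of "\<lambda>k. s k * b k" K] assms(2) by (simp add: abs_mult)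
  also have "\<dots> \<le> (\<Sum>k\<in>K. s k)"
    using assms(2,4) by (intro sum_mono) (simp add: mult_left_le)
  finally have "c * \<bar>\<Sum>k\<in>K. s k * b k\<bar> \<le> c * (\<Sum>k\<in>K. s k)"
    using assms(1) by (rule mult_left_mono)
  also have "\<dots> = (\<Sum>k\<in>K. s k * c)" by (simp add: sum_distrib_left mult.commute)
  also have "\<dots> \<le> (\<Sum>k\<in>K. s k * a k)"
    using assms(2,3) by (intro sum_mono mult_left_mono)
  finally show ?thesis .
qed

lemma ex_gt_of_mean_gt:
  fixes f :: "nat \<Rightarrow> real"
  assumes "0 < n" and "c < (1 / real n) * (\<Sum>i<n. f i)"
  shows "\<exists>i<n. c < f i"
proof (rule ccontr)
  assume "\<not> (\<exists>i<n. c < f i)"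
  then have "(\<Sum>i<n. f i) \<le> (\<Sum>i<n. c)" by (intro sum_mono) (meson lessThan_iff not_less)
  then show False using assms by (simp add: field_simps)
qed

lemma abs_diff_eq_abs_add_abs:
  fixes a b :: real
  assumes "a * b < 0"
  shows "\<bar>a - b\<bar> = \<bar>a\<bar> + \<bar>b\<bar>"
  using assms by (auto simp: abs_if mult_less_0_iff)

lemma ln_le_half_self:
  fixes K :: real
  assumes "0 < K"
  shows "ln K \<le> K / 2"
proof -
  have "ln K = ln 2 + ln (K / 2)" using assms by (simp add: ln_div)
  also have "ln (K / 2) \<le> K / 2 - 1" using assms by (intro ln_le_minus_one) auto
  also have "ln (2::real) < 1" by (rule ln_2_less_1)
  finally show ?thesis by simp
qed

lemma less_of_logistic_loss_gt:
  fixes L z :: real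
  assumes "0 < L" and "L < ln (1 + exp (- z))"
  shows "z < ln (1 / (exp L - 1))"
proof -
  have "exp L < exp (ln (1 + exp (- z)))" using assms(2) by simp
  then have "exp L - 1 < exp (- z)" by (simp add: add_pos_pos)
  then have "ln (exp L - 1) < ln (exp (- z))" using assms(1) by (subst ln_less_cancel_iff) auto
  then show ?thesis using assms(1) by (simp add: ln_div)
qed

lemma lam_le:
  fixes \<gamma> \<eta> :: real
  assumes "0 < \<gamma>" and "\<gamma> \<le> 1" and "0 < \<eta>"
    and \<eta>_ge: "32 / \<gamma>\<^sup>2 * ln (256 / \<gamma>\<^sup>2) \<le> \<eta>"
  shows "lam \<gamma> \<eta> \<le> \<eta> * \<gamma> / 4"
proof -
  define K where "K = \<eta> * \<gamma>\<^sup>2 / 4"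
  have "0 < K" using assms by (simp add: K_def)
  have \<gamma>2: "0 < \<gamma>\<^sup>2" "\<gamma>\<^sup>2 \<le> 1" using assms(1,2) by (auto simp: power_le_one)
  have K_ge: "8 * ln (256 / \<gamma>\<^sup>2) \<le> K"
    using mult_right_mono[OF \<eta>_ge, of "\<gamma>\<^sup>2"] \<gamma>2 by (simp add: K_def)
  have ln_32_le: "ln (32 / \<gamma>\<^sup>2) \<le> ln (256 / \<gamma>\<^sup>2)" using \<gamma>2 by (simp add: divide_right_mono)
  have exp_minus_one: "1 / (8 * \<eta>) \<le> exp (1 / (8 * \<eta>)) - 1"
    using exp_ge_add_one_self[of "1 / (8 * \<eta>)"] by linarith
  then have "1 / (exp (1 / (8 * \<eta>)) - 1) \<le> 8 * \<eta>"
    using assms(3) by (simp add: field_simps)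
  then have "ln (1 / (exp (1 / (8 * \<eta>)) - 1)) \<le> ln (8 * \<eta>)"
    using exp_minus_one assms(3) by simp
  also have "ln (8 * \<eta>) = ln (K * (32 / \<gamma>\<^sup>2))" using \<gamma>2 by (simp add: K_def field_simps)
  also have "\<dots> = ln K + ln (32 / \<gamma>\<^sup>2)" using \<open>0 < K\<close> \<gamma>2 by (intro ln_mult_pos) auto
  also have "\<dots> \<le> K / 2 + K / 8"
    using ln_le_half_self[OF \<open>0 < K\<close>] K_ge ln_32_le by linarith
  also have "\<dots> \<le> \<gamma> * (\<eta> * \<gamma> / 4)" using \<open>0 < K\<close> by (simp add: K_def power2_eq_square)
  finally show ?thesis using assms(1) by (simp add: lam_def field_simps)
qed

lemma gd_Suc_inner:
  "gd n x \<eta> (Suc t) \<bullet> u = gd n x \<eta> t \<bullet> u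
     + \<eta> / real n * (\<Sum>k<n. 1 / (1 + exp (gd n x \<eta> t \<bullet> x k)) * (x k \<bullet> u))"
  by (simp add: logloss_grad_def inner_diff_left inner_add_left inner_sum_left sum_distrib_left sum_negf
      divide_simps)

declare gd.simps(2) [simp del]

locale max_margin_gd =
  fixes n :: nat and x :: "nat \<Rightarrow> real^2" and wstar vstar :: "real^2" and \<eta> :: real
  assumes n_ge_1: "n \<ge> 1"
    and norm_x_le_1: "\<forall>i<n. norm (x i) \<le> 1"
    and separable: "separable n x"
    and norm_wstar: "norm wstar = 1"
    and margin_wstar: "margin_of n x wstar = max_margin n x"
    and norm_vstar: "norm vstar = 1"
    and vstar_orth: "vstar \<bullet> wstar = 0"
    and eta_pos: "0 < \<eta>"
begin

abbreviation \<gamma> :: real where "\<gamma> \<equiv> max_margin n x"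

abbreviation w_hat :: "nat \<Rightarrow> real" where "w_hat t \<equiv> gd n x \<eta> t \<bullet> wstar"

abbreviation w_tilde :: "nat \<Rightarrow> real" where "w_tilde t \<equiv> gd n x \<eta> t \<bullet> vstar"

lemma margin_le_inner:
  assumes "i < n"
  shows "\<gamma> \<le> x i \<bullet> wstar"
proof -
  have "\<gamma> = Min ((\<lambda>i. wstar \<bullet> x i) ` {..<n})" using margin_wstar by (simp add: margin_of_def)
  also have "\<dots> \<le> wstar \<bullet> x i" using assms by (intro Min_le) auto
  finally show ?thesis by (simp add: inner_commute)
qed

lemma abs_inner_le_1: "norm u = 1 \<Longrightarrow> i < n \<Longrightarrow> \<bar>x i \<bullet> u\<bar> \<le> 1"
  using Cauchy_Schwarz_ineq2[of "x i" u] norm_x_le_1 by auto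

lemma margin_of_le_1:
  assumes "norm u = 1"
  shows "margin_of n x u \<le> 1"
proof -
  have "margin_of n x u \<le> u \<bullet> x 0" unfolding margin_of_def using n_ge_1 by (intro Min_le) auto
  also have "\<dots> \<le> 1" using abs_inner_le_1[OF assms, of 0] n_ge_1 by (simp add: inner_commute)
  finally show ?thesis .
qed

lemma margin_le_1: "\<gamma> \<le> 1"
  using margin_of_le_1[OF norm_wstar] margin_wstar by simp

lemma margin_pos: "0 < \<gamma>"
proof -
  obtain w where w: "\<forall>i<n. 0 < w \<bullet> x i" using separable unfolding separable_def by blast
  then have "w \<noteq> 0" using n_ge_1 by force
  define u where "u = (1 / norm w) *\<^sub>R w"
  have "norm u = 1" using \<open>w \<noteq> 0\<close> by (simp add: u_def)
  have "\<forall>i<n. 0 < u \<bullet> x i" using w \<open>w \<noteq> 0\<close> by (simp add: u_def)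
  then have "0 < margin_of n x u"
    unfolding margin_of_def using n_ge_1 by (subst Min_gr_iff) (auto simp: lessThan_empty_iff)
  also have "margin_of n x u \<le> \<gamma>"
    unfolding max_margin_def
  proof (rule cSUP_upper)
    show "u \<in> {w. norm w = 1}" using \<open>norm u = 1\<close> by simp
    show "bdd_above (margin_of n x ` {w. norm w = 1})"
      using margin_of_le_1 by (intro bdd_aboveI2[where M = 1]) simp
  qed
  finally show ?thesis .
qed

lemma w_hat_increment_ge: "\<gamma> * \<bar>w_tilde (Suc t) - w_tilde t\<bar> \<le> w_hat (Suc t) - w_hat t"
proof -
  let ?s = "\<lambda>k. 1 / (1 + exp (gd n x \<eta> t \<bullet> x k))"
  have "\<gamma> * \<bar>\<Sum>k<n. ?s k * (x k \<bullet> vstar)\<bar> \<le> (\<Sum>k<n. ?s k * (x k \<bullet> wstar))"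
    using margin_pos margin_le_inner abs_inner_le_1[OF norm_vstar]
    by (intro mult_abs_weighted_sum_le_weighted_sum) (auto simp: add_pos_pos less_imp_le)
  then have "\<eta> / real n * (\<gamma> * \<bar>\<Sum>k<n. ?s k * (x k \<bullet> vstar)\<bar>)
      \<le> \<eta> / real n * (\<Sum>k<n. ?s k * (x k \<bullet> wstar))"
    using eta_pos by (intro mult_left_mono) auto
  then show ?thesis using eta_pos by (simp add: gd_Suc_inner abs_mult mult_ac)
qed

lemma w_hat_le_Suc: "w_hat t \<le> w_hat (Suc t)"
  using w_hat_increment_ge[of t] mult_nonneg_nonneg[OF less_imp_le[OF margin_pos] abs_ge_zero[of "w_tilde (Suc t) - w_tilde t"]]
  by linarith

lemma w_hat_nonneg: "0 \<le> w_hat t"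
  by (induction t) (auto intro: order_trans w_hat_le_Suc)

lemma w_hat_Suc_ge: "\<eta> * \<gamma> / 2 \<le> w_hat (Suc t)"
proof (induction t)
  case 0
  have "\<eta> / real n * (\<Sum>k<n. \<gamma> / 2) \<le> \<eta> / real n * (\<Sum>k<n. x k \<bullet> wstar / 2)"
    using eta_pos margin_le_inner by (intro mult_left_mono sum_mono) auto
  then show ?case using n_ge_1 by (simp add: gd_Suc_inner)
next
  case (Suc t)
  then show ?case using w_hat_le_Suc order_trans by blast
qed

lemma margin_mult_diff_less_abs_w_tilde:
  assumes "1 / (8 * \<eta>) < logloss n x (gd n x \<eta> t)"
  shows "\<gamma> * (w_hat t - lam \<gamma> \<eta>) < \<bar>w_tilde t\<bar>"
proof -
  obtain i where "i < n" and i: "1 / (8 * \<eta>) < ln (1 + exp (- (gd n x \<eta> t \<bullet> x i)))"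
    using ex_gt_of_mean_gt[of n] assms n_ge_1 unfolding logloss_def by auto
  have "gd n x \<eta> t \<bullet> x i < \<gamma> * lam \<gamma> \<eta>"
    using less_of_logistic_loss_gt[OF _ i] eta_pos margin_pos by (simp add: lam_def)
  moreover have "gd n x \<eta> t \<bullet> x i = w_hat t * (x i \<bullet> wstar) + w_tilde t * (x i \<bullet> vstar)"
    by (subst orthonormal_pair_expansion[OF _ norm_wstar norm_vstar vstar_orth, of "x i"])
      (simp_all add: inner_add_right inner_commute)
  moreover have "\<gamma> * w_hat t \<le> w_hat t * (x i \<bullet> wstar)"
    using mult_left_mono[OF margin_le_inner[OF \<open>i < n\<close>] w_hat_nonneg] by (simp add: mult.commute)
  moreover have "\<bar>w_tilde t * (x i \<bullet> vstar)\<bar> \<le> \<bar>w_tilde t\<bar>"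
    using mult_left_mono[OF abs_inner_le_1[OF norm_vstar \<open>i < n\<close>], of "\<bar>w_tilde t\<bar>"]
    by (simp add: abs_mult)
  ultimately show ?thesis by (simp add: right_diff_distrib abs_le_iff)
qed

lemma w_hat_growth_at_sign_change:
  assumes \<eta>_ge: "eta0 n \<gamma> \<le> \<eta>"
    and loss: "1 / (8 * \<eta>) < logloss n x (gd n x \<eta> t)"
    and loss_Suc: "1 / (8 * \<eta>) < logloss n x (gd n x \<eta> (Suc t))"
    and sign_change: "w_tilde (Suc t) * w_tilde t < 0"
  shows "(1 + \<gamma>\<^sup>2) * w_hat t \<le> w_hat (Suc t)"
proof (cases t)
  case 0
  then show ?thesis using w_hat_le_Suc[of 0] by simp
next
  case (Suc m)
  have "lam \<gamma> \<eta> \<le> \<eta> * \<gamma> / 4"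
    using lam_le[OF margin_pos margin_le_1 eta_pos] \<eta>_ge by (simp add: eta0_def)
  then have "w_hat t \<le> 2 * w_hat t - 2 * lam \<gamma> \<eta>" using w_hat_Suc_ge[of m] unfolding Suc by linarith
  then have "\<gamma> * w_hat t \<le> \<gamma> * (2 * w_hat t - 2 * lam \<gamma> \<eta>)"
    using margin_pos by (intro mult_left_mono) auto
  also have "\<dots> \<le> \<bar>w_tilde t\<bar> + \<bar>w_tilde (Suc t)\<bar>"
    using margin_mult_diff_less_abs_w_tilde[OF loss] margin_mult_diff_less_abs_w_tilde[OF loss_Suc]
      mult_left_mono[OF w_hat_le_Suc[of t] less_imp_le[OF margin_pos]]
    by (simp add: algebra_simps)
  also have "\<dots> = \<bar>w_tilde (Suc t) - w_tilde t\<bar>"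
    using abs_diff_eq_abs_add_abs[OF sign_change] by simp
  finally have "\<gamma>\<^sup>2 * w_hat t \<le> \<gamma> * \<bar>w_tilde (Suc t) - w_tilde t\<bar>"
    using margin_pos by (simp add: power2_eq_square mult.assoc mult_left_mono)
  also have "\<dots> \<le> w_hat (Suc t) - w_hat t" by (rule w_hat_increment_ge)
  finally show ?thesis by (simp add: distrib_right)
qed

end

theorem lemma3:
  fixes n :: nat and x :: "nat \<Rightarrow> real^2" and \<eta> :: real
    and wstar vstar :: "real^2" and t :: nat
  assumes "n \<ge> 1"
    and "\<forall>i<n. norm (x i) \<le> 1"
    and "separable n x"
    and "norm wstar = 1"
    and "margin_of n x wstar = max_margin n x"
    and "norm vstar = 1" and "vstar \<bullet> wstar = 0"
    and "\<eta> > 0"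
    and "\<eta> \<ge> eta0 n (max_margin n x)"
    and "oscillation n x \<eta> wstar vstar t"
  shows "gd n x \<eta> (Suc t) \<bullet> wstar \<ge> (1 + (max_margin n x)\<^sup>2) * (gd n x \<eta> t \<bullet> wstar)"
proof -
  interpret max_margin_gd n x wstar vstar \<eta>
    using assms(1-8) by unfold_locales
  have "1 / (8 * \<eta>) < logloss n x (gd n x \<eta> t)"
    and "1 / (8 * \<eta>) < logloss n x (gd n x \<eta> (Suc t))"
    and "w_tilde (Suc t) * w_tilde t < 0"
    using assms(10) unfolding oscillation_def by auto
  then show ?thesis using w_hat_growth_at_sign_change[OF assms(9)] by simp
qed

end
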